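(* Let $G$ be a graph, and let $S$ be the set of all vertices $x\in V(G)$ such that $x$ has three pairwise nonadjacent neighbours (i.e. the subgraph induced by the neighbourhood of $x$ has stability number at least $3$). If $S$ is a clique, then $G$ is $T_0$-free.
   Context: Graphs are finite and simple. $T_0$ is the graph with vertices $p,q,u_0,u_1,u_2,u_3,w_1,w_2,w_3$ and edges $pq,pu_0,pu_2,pu_3,qu_1,qu_2,qu_3,u_0w_1,u_1w_1,u_2w_2,u_3w_3,w_1w_2,w_1w_3,w_2w_3$. $G$ is $T_0$-free if no induced subgraph of $G$ is isomorphic to $T_0$. A clique is a (possibly empty) set of pairwise adjacent vertices. *)

theory Defs
  imports Main
begin

definition simple_graph :: "'a set \<Rightarrow> ('a \<Rightarrow> 'a \<Rightarrow> bool) \<Rightarrow> bool" where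
  "simple_graph V E \<longleftrightarrow> finite V \<and> (\<forall>x y. E x y \<longrightarrow> x \<in> V \<and> y \<in> V)
     \<and> (\<forall>x y. E x y \<longrightarrow> E y x) \<and> (\<forall>x. \<not> E x x)"

definition clique :: "'a set \<Rightarrow> ('a \<Rightarrow> 'a \<Rightarrow> bool) \<Rightarrow> 'a set \<Rightarrow> bool" where
  "clique V E K \<longleftrightarrow> K \<subseteq> V \<and> (\<forall>x\<in>K. \<forall>y\<in>K. x \<noteq> y \<longrightarrow> E x y)"

definition has_stable3_nbhd :: "('a \<Rightarrow> 'a \<Rightarrow> bool) \<Rightarrow> 'a \<Rightarrow> bool" where
  "has_stable3_nbhd E x \<longleftrightarrow> (\<exists>a b c. E x a \<and> E x b \<and> E x c \<and>
      a \<noteq> b \<and> a \<noteq> c \<and> b \<noteq> c \<and> \<not> E a b \<and> \<not> E a c \<and> \<not> E b c)"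

datatype t0v = P | Q | U0 | U1 | U2 | U3 | W1 | W2 | W3

definition t0_edges :: "(t0v \<times> t0v) set" where
  "t0_edges = {(P,Q),(P,U0),(P,U2),(P,U3),(Q,U1),(Q,U2),(Q,U3),(U0,W1),(U1,W1),
               (U2,W2),(U3,W3),(W1,W2),(W1,W3),(W2,W3)}"

definition t0_adj :: "t0v \<Rightarrow> t0v \<Rightarrow> bool" where
  "t0_adj a b \<longleftrightarrow> (a, b) \<in> t0_edges \<or> (b, a) \<in> t0_edges"

definition contains_induced_T0 :: "'a set \<Rightarrow> ('a \<Rightarrow> 'a \<Rightarrow> bool) \<Rightarrow> bool" where
  "contains_induced_T0 V E \<longleftrightarrow> (\<exists>f :: t0v \<Rightarrow> 'a. inj f \<and> range f \<subseteq> V \<and>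
      (\<forall>a b. E (f a) (f b) \<longleftrightarrow> t0_adj a b))"

definition T0_free :: "'a set \<Rightarrow> ('a \<Rightarrow> 'a \<Rightarrow> bool) \<Rightarrow> bool" where
  "T0_free V E \<longleftrightarrow> \<not> contains_induced_T0 V E"

end

theory Submission
  imports Defs
begin

(* In T_0 the vertices p and w_1 both have three pairwise nonadjacent neighbours,
   namely u_0, u_2, u_3 and u_0, u_1, w_2. An induced copy of T_0 in G keeps this
   property for the images of p and w_1, which therefore lie in S; but they are
   nonadjacent, so S is not a clique. *)

lemma has_stable3_nbhd_induced_image:
  assumes "inj f" and "\<And>a b. E (f a) (f b) \<longleftrightarrow> H a b"
    and "has_stable3_nbhd H x"
  shows "has_stable3_nbhd E (f x)"
proof -
  obtain a b c where "H x a" "H x b" "H x c" "a \<noteq> b" "a \<noteq> c" "b \<noteq> c"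
    "\<not> H a b" "\<not> H a c" "\<not> H b c"
    using assms(3) unfolding has_stable3_nbhd_def by blast
  then show ?thesis
    unfolding has_stable3_nbhd_def using assms(1,2)
    by (intro exI[of _ "f a"] exI[of _ "f b"] exI[of _ "f c"]) (simp add: inj_eq)
qed

lemma has_stable3_nbhd_T0_P: "has_stable3_nbhd t0_adj P"
  unfolding has_stable3_nbhd_def
  by (intro exI[of _ U0] exI[of _ U2] exI[of _ U3]) (simp add: t0_adj_def t0_edges_def)

lemma has_stable3_nbhd_T0_W1: "has_stable3_nbhd t0_adj W1"
  unfolding has_stable3_nbhd_def
  by (intro exI[of _ U0] exI[of _ U1] exI[of _ W2]) (simp add: t0_adj_def t0_edges_def)

lemma not_t0_adj_P_W1: "\<not> t0_adj P W1"
  by (simp add: t0_adj_def t0_edges_def)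

theorem proposition4p11:
  fixes V :: "'a set" and E :: "'a \<Rightarrow> 'a \<Rightarrow> bool"
  assumes "simple_graph V E"
    and "clique V E {x \<in> V. has_stable3_nbhd E x}"
  shows "T0_free V E"
  unfolding T0_free_def contains_induced_T0_def
proof
  assume "\<exists>f :: t0v \<Rightarrow> 'a. inj f \<and> range f \<subseteq> V \<and> (\<forall>a b. E (f a) (f b) \<longleftrightarrow> t0_adj a b)"
  then obtain f :: "t0v \<Rightarrow> 'a" where inj: "inj f" and range: "range f \<subseteq> V"
    and induced: "\<And>a b. E (f a) (f b) \<longleftrightarrow> t0_adj a b"
    by blast
  have "has_stable3_nbhd E (f P)" "has_stable3_nbhd E (f W1)"
    using has_stable3_nbhd_induced_image[where H = t0_adj, OF inj induced]
      has_stable3_nbhd_T0_P has_stable3_nbhd_T0_W1 by auto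
  moreover have "f P \<in> V" "f W1 \<in> V"
    using range by auto
  moreover have "f P \<noteq> f W1"
    using inj by (simp add: inj_eq)
  ultimately have "E (f P) (f W1)"
    using assms(2) unfolding clique_def by blast
  then show False
    using induced not_t0_adj_P_W1 by simp
qed

end
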